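(* Let $N\ge 1$, fix a right transversal of $\Gamma_1(N)$ in $\mathrm{SL}_2(\mathbb{Z})$ with right coset representative function $g\mapsto\overline{g}$, and for $x,y\in\mathrm{SL}_2(\mathbb{Z})$ let $U(x,y)=xy\,(\overline{xy})^{-1}$. Let $T=\begin{pmatrix}1&1\\0&1\end{pmatrix}$. Let $a$ be an integer written as $a=qN+r$ with $q\in\mathbb{Z}$ and $0\le r<N$, and let $M\in\mathrm{SL}_2(\mathbb{Z})$. Then $$U(\overline{M},T^a)=U(\overline{M},T^N)^q\,U(\overline{M},T^r).$$
   Context: $\Gamma_1(N)$ is the subgroup of $\mathrm{SL}_2(\mathbb{Z})$ of matrices $\begin{pmatrix}a&b\\c&d\end{pmatrix}$ with $c\equiv 0$ and $a\equiv d\equiv 1 \pmod N$. A right transversal $\mathcal{T}$ of a subgroup $H$ in a group $G$ is a subset of $G$ containing the identity and exactly one element of each right coset $Hg$; the right coset representative function sends $g$ to the unique $\overline{g}\in\mathcal{T}$ with $Hg=H\overline{g}$. *)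

theory Defs
  imports "HOL-Analysis.Analysis" "HOL-Algebra.Coset"
begin

text \<open>SL_2(Z) as a HOL-Algebra monoid on 2x2 integer matrices; entries a = A$1$1,
  b = A$1$2, c = A$2$1, d = A$2$2.\<close>

definition SL2Z :: "(int^2^2) monoid" where
  "SL2Z = \<lparr>carrier = {A. det A = 1}, mult = (**), one = mat 1\<rparr>"

definition Gamma1 :: "nat \<Rightarrow> (int^2^2) set" where
  "Gamma1 N = {A \<in> carrier SL2Z.
      A$2$1 mod int N = 0 \<and> A$1$1 mod int N = 1 mod int N \<and> A$2$2 mod int N = 1 mod int N}"

definition right_transversal :: "(int^2^2) set \<Rightarrow> (int^2^2) set \<Rightarrow> bool" where
  "right_transversal H Tr \<longleftrightarrow>
     Tr \<subseteq> carrier SL2Z \<and> \<one>\<^bsub>SL2Z\<^esub> \<in> Tr \<and>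
     (\<forall>g \<in> carrier SL2Z. \<exists>!t. t \<in> Tr \<and> H #>\<^bsub>SL2Z\<^esub> g = H #>\<^bsub>SL2Z\<^esub> t)"

definition coset_rep :: "(int^2^2) set \<Rightarrow> (int^2^2) set \<Rightarrow> int^2^2 \<Rightarrow> int^2^2" where
  "coset_rep H Tr g = (THE t. t \<in> Tr \<and> H #>\<^bsub>SL2Z\<^esub> g = H #>\<^bsub>SL2Z\<^esub> t)"

definition U :: "(int^2^2) set \<Rightarrow> (int^2^2) set \<Rightarrow> int^2^2 \<Rightarrow> int^2^2 \<Rightarrow> int^2^2" where
  "U H Tr x y = x \<otimes>\<^bsub>SL2Z\<^esub> y \<otimes>\<^bsub>SL2Z\<^esub> inv\<^bsub>SL2Z\<^esub> (coset_rep H Tr (x \<otimes>\<^bsub>SL2Z\<^esub> y))"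

definition Tmat :: "int^2^2" where
  "Tmat = vector [vector [1, 1], vector [0, 1]]"

end

theory Submission
  imports Defs "HOL-Algebra.Generated_Groups"
begin

text \<open>\<open>T\<^sup>N\<close> lies in the normal subgroup \<open>\<Gamma>(N) \<subseteq> \<Gamma>\<^sub>1(N)\<close>, so for every \<open>m\<close> the conjugate
  \<open>c = m T\<^sup>N m\<^sup>-\<^sup>1\<close> lies in \<open>\<Gamma>\<^sub>1(N)\<close>. Hence \<open>m T\<^sup>a = c\<^sup>q (m T\<^sup>r)\<close>: the products \<open>m T\<^sup>a\<close> and
  \<open>m T\<^sup>r\<close> have the same coset representative, and \<open>U(m, T\<^sup>a) = c\<^sup>q U(m, T\<^sup>r)\<close>. For \<open>m\<close> in the
  transversal, \<open>m T\<^sup>N = c m\<close> has representative \<open>m\<close>, so \<open>U(m, T\<^sup>N) = c\<close>.\<close>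

lemma (in group) conj_in_hom: "g \<in> carrier G \<Longrightarrow> (\<lambda>x. g \<otimes> x \<otimes> inv g) \<in> hom G G"
  by (rule homI) (simp_all add: m_assoc inv_solve_left)

lemma (in group) int_pow_conj:
  assumes "g \<in> carrier G" "x \<in> carrier G"
  shows "(g \<otimes> x \<otimes> inv g) [^] (n::int) = g \<otimes> x [^] n \<otimes> inv g"
  using hom_int_pow[OF conj_in_hom[OF assms(1)] assms(2) is_group is_group] by simp

lemma vec2_2_eq_iff:
  "(A::'a^2^2) = B \<longleftrightarrow> A$1$1 = B$1$1 \<and> A$1$2 = B$1$2 \<and> A$2$1 = B$2$1 \<and> A$2$2 = B$2$2"
  by (auto simp: vec_eq_iff forall_2)

lemma matrix_mult_2_entries:
  fixes A B :: "'a::comm_semiring_1^2^2"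
  shows "(A ** B)$1$1 = A$1$1 * B$1$1 + A$1$2 * B$2$1"
    and "(A ** B)$1$2 = A$1$1 * B$1$2 + A$1$2 * B$2$2"
    and "(A ** B)$2$1 = A$2$1 * B$1$1 + A$2$2 * B$2$1"
    and "(A ** B)$2$2 = A$2$1 * B$1$2 + A$2$2 * B$2$2"
  by (simp_all add: matrix_matrix_mult_def sum_2)

lemma SL2Z_simps:
  "carrier SL2Z = {A. det A = 1}" "mult SL2Z = (**)" "one SL2Z = mat 1"
  by (simp_all add: SL2Z_def)

definition adjugate2 :: "'a::comm_ring_1^2^2 \<Rightarrow> 'a^2^2" where
  "adjugate2 A = vector [vector [A$2$2, - A$1$2], vector [- A$2$1, A$1$1]]"

lemma adjugate2_mult: "det A = 1 \<Longrightarrow> adjugate2 A ** A = mat 1"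
  by (simp add: vec2_2_eq_iff matrix_mult_2_entries mat_def adjugate2_def det_2 algebra_simps)

lemma det_adjugate2: "det (adjugate2 A) = det A"
  by (simp add: adjugate2_def det_2 algebra_simps)

lemma group_SL2Z: "group SL2Z"
proof (rule groupI)
  fix A assume "A \<in> carrier SL2Z"
  then show "\<exists>B\<in>carrier SL2Z. B \<otimes>\<^bsub>SL2Z\<^esub> A = \<one>\<^bsub>SL2Z\<^esub>"
    using adjugate2_mult[of A] det_adjugate2[of A] by (auto simp: SL2Z_simps)
qed (auto simp: SL2Z_simps det_mul matrix_mul_assoc)

interpretation SL2: group SL2Z
  by (rule group_SL2Z)

lemma inv_SL2Z: "A \<in> carrier SL2Z \<Longrightarrow> inv\<^bsub>SL2Z\<^esub> A = adjugate2 A"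
  using SL2.inv_equality[of "adjugate2 A" A] adjugate2_mult[of A] det_adjugate2[of A]
  by (simp add: SL2Z_simps)

lemma Gamma1_iff:
  "A \<in> Gamma1 N \<longleftrightarrow>
     det A = 1 \<and> int N dvd A$2$1 \<and> int N dvd A$1$1 - 1 \<and> int N dvd A$2$2 - 1"
  by (auto simp: Gamma1_def SL2Z_simps mod_eq_dvd_iff)

lemma subgroup_Gamma1: "subgroup (Gamma1 N) SL2Z"
proof (rule SL2.subgroupI)
  show "Gamma1 N \<subseteq> carrier SL2Z"
    by (auto simp: Gamma1_def)
  have "mat 1 \<in> Gamma1 N"
    by (simp add: Gamma1_iff det_I) (simp add: mat_def)
  then show "Gamma1 N \<noteq> {}"
    by blast
next
  fix A assume "A \<in> Gamma1 N"
  moreover have "adjugate2 A $1$1 = A$2$2" "adjugate2 A $2$1 = - A$2$1"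
    "adjugate2 A $2$2 = A$1$1"
    by (simp_all add: adjugate2_def)
  ultimately show "inv\<^bsub>SL2Z\<^esub> A \<in> Gamma1 N"
    by (simp add: Gamma1_iff inv_SL2Z SL2Z_simps det_adjugate2)
next
  fix A B assume "A \<in> Gamma1 N" "B \<in> Gamma1 N"
  then have A: "det A = 1" "int N dvd A$2$1" "int N dvd A$1$1 - 1" "int N dvd A$2$2 - 1"
    and B: "det B = 1" "int N dvd B$2$1" "int N dvd B$1$1 - 1" "int N dvd B$2$2 - 1"
    by (simp_all add: Gamma1_iff)
  have "(A ** B)$2$1 = B$1$1 * A$2$1 + A$2$2 * B$2$1"
    and "(A ** B)$1$1 - 1 = A$1$1 * (B$1$1 - 1) + (A$1$1 - 1) + A$1$2 * B$2$1"
    and "(A ** B)$2$2 - 1 = B$1$2 * A$2$1 + A$2$2 * (B$2$2 - 1) + (A$2$2 - 1)"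
    by (simp_all add: matrix_mult_2_entries algebra_simps)
  then have "int N dvd (A ** B)$2$1" "int N dvd (A ** B)$1$1 - 1" "int N dvd (A ** B)$2$2 - 1"
    by (simp_all only:) (intro dvd_add dvd_mult A B)+
  with A(1) B(1) show "A \<otimes>\<^bsub>SL2Z\<^esub> B \<in> Gamma1 N"
    by (simp add: Gamma1_iff SL2Z_simps det_mul)
qed

definition translation_mat :: "int \<Rightarrow> int^2^2" where
  "translation_mat k = vector [vector [1, k], vector [0, 1]]"

lemma translation_mat_carrier: "translation_mat k \<in> carrier SL2Z"
  by (simp add: SL2Z_simps translation_mat_def det_2)

lemma Tmat_carrier: "Tmat \<in> carrier SL2Z"
  by (simp add: SL2Z_simps Tmat_def det_2)

lemma Tmat_nat_pow: "Tmat [^]\<^bsub>SL2Z\<^esub> (n::nat) = translation_mat (int n)"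
  by (induction n)
    (simp_all add: SL2Z_simps translation_mat_def Tmat_def vec2_2_eq_iff mat_def
      matrix_mult_2_entries)

lemma Tmat_int_pow: "Tmat [^]\<^bsub>SL2Z\<^esub> (k::int) = translation_mat k"
proof (cases "k \<ge> 0")
  case True
  then show ?thesis
    using pow_nat[OF True, of SL2Z Tmat] Tmat_nat_pow[of "nat k"] by simp
next
  case False
  have "Tmat [^]\<^bsub>SL2Z\<^esub> k = inv\<^bsub>SL2Z\<^esub> translation_mat (- k)"
    using SL2.int_pow_neg_int[OF Tmat_carrier, of "nat (- k)"] False by (simp add: Tmat_nat_pow)
  also have "\<dots> = translation_mat k"
    using translation_mat_carrier by (simp add: inv_SL2Z adjugate2_def translation_mat_def)
  finally show ?thesis .
qed

lemma conj_translation_mat_in_Gamma1: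
  assumes "g \<in> carrier SL2Z" and "int N dvd k"
  shows "g \<otimes>\<^bsub>SL2Z\<^esub> translation_mat k \<otimes>\<^bsub>SL2Z\<^esub> inv\<^bsub>SL2Z\<^esub> g \<in> Gamma1 N"
proof -
  let ?C = "g ** translation_mat k ** adjugate2 g"
  have "g$1$1 * g$2$2 - g$1$2 * g$2$1 = 1"
    using assms(1) by (simp add: SL2Z_simps det_2)
  then have "?C$1$1 = 1 - g$1$1 * g$2$1 * k" "?C$2$1 = - g$2$1 * g$2$1 * k"
     "?C$2$2 = 1 + g$1$1 * g$2$1 * k"
    by (simp_all add: matrix_mult_2_entries translation_mat_def adjugate2_def algebra_simps)
  moreover have "det ?C = 1"
    using assms(1) translation_mat_carrier by (simp add: SL2Z_simps det_mul det_adjugate2)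
  ultimately show ?thesis
    using assms by (simp add: Gamma1_iff inv_SL2Z SL2Z_simps)
qed

locale SL2Z_transversal =
  fixes H Tr :: "(int^2^2) set"
  assumes subgroup: "subgroup H SL2Z"
    and transversal: "right_transversal H Tr"
begin

lemma coset_rep_spec:
  assumes "g \<in> carrier SL2Z"
  shows "coset_rep H Tr g \<in> Tr" and "H #>\<^bsub>SL2Z\<^esub> g = H #>\<^bsub>SL2Z\<^esub> coset_rep H Tr g"
  using theI'[of "\<lambda>t. t \<in> Tr \<and> H #>\<^bsub>SL2Z\<^esub> g = H #>\<^bsub>SL2Z\<^esub> t"] assms transversal
  unfolding coset_rep_def right_transversal_def by auto

lemma transversal_carrier: "t \<in> Tr \<Longrightarrow> t \<in> carrier SL2Z"
  using transversal by (auto simp: right_transversal_def)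

lemma coset_rep_eqI:
  assumes "g \<in> carrier SL2Z" "t \<in> Tr" "H #>\<^bsub>SL2Z\<^esub> g = H #>\<^bsub>SL2Z\<^esub> t"
  shows "coset_rep H Tr g = t"
  using assms transversal unfolding coset_rep_def right_transversal_def
  by (intro the1_equality) auto

lemma coset_rep_carrier: "g \<in> carrier SL2Z \<Longrightarrow> coset_rep H Tr g \<in> carrier SL2Z"
  by (rule transversal_carrier[OF coset_rep_spec(1)])

lemma coset_rep_mult_subgroup:
  assumes "h \<in> H" "g \<in> carrier SL2Z"
  shows "coset_rep H Tr (h \<otimes>\<^bsub>SL2Z\<^esub> g) = coset_rep H Tr g"
proof -
  have "h \<in> carrier SL2Z"
    using assms(1) subgroup.mem_carrier[OF subgroup] by blast
  then have "H #>\<^bsub>SL2Z\<^esub> (h \<otimes>\<^bsub>SL2Z\<^esub> g) = H #>\<^bsub>SL2Z\<^esub> g"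
    using assms subgroup SL2.coset_mult_assoc[of H h g] SL2.coset_join2[of h H]
    by (simp add: subgroup.subset)
  with assms \<open>h \<in> carrier SL2Z\<close> show ?thesis
    by (intro coset_rep_eqI) (auto simp: coset_rep_spec)
qed

lemma coset_rep_transversal: "t \<in> Tr \<Longrightarrow> coset_rep H Tr t = t"
  using transversal by (intro coset_rep_eqI) (auto simp: right_transversal_def)

lemma U_mult_subgroup:
  assumes "x \<in> carrier SL2Z" "y \<in> carrier SL2Z" "z \<in> carrier SL2Z" "h \<in> H"
    and "x \<otimes>\<^bsub>SL2Z\<^esub> y = h \<otimes>\<^bsub>SL2Z\<^esub> (x \<otimes>\<^bsub>SL2Z\<^esub> z)"
  shows "U H Tr x y = h \<otimes>\<^bsub>SL2Z\<^esub> U H Tr x z"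
  using assms coset_rep_carrier subgroup.mem_carrier[OF subgroup, of h]
  by (simp add: U_def coset_rep_mult_subgroup SL2.m_assoc)

lemma U_int_pow_mult:
  assumes "x \<in> carrier SL2Z" "t \<in> carrier SL2Z" "s \<in> carrier SL2Z"
    and "x \<otimes>\<^bsub>SL2Z\<^esub> t \<otimes>\<^bsub>SL2Z\<^esub> inv\<^bsub>SL2Z\<^esub> x \<in> H"
  shows "U H Tr x (t [^]\<^bsub>SL2Z\<^esub> (q::int) \<otimes>\<^bsub>SL2Z\<^esub> s) =
    (x \<otimes>\<^bsub>SL2Z\<^esub> t \<otimes>\<^bsub>SL2Z\<^esub> inv\<^bsub>SL2Z\<^esub> x) [^]\<^bsub>SL2Z\<^esub> q \<otimes>\<^bsub>SL2Z\<^esub> U H Tr x s"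
proof (rule U_mult_subgroup)
  show "(x \<otimes>\<^bsub>SL2Z\<^esub> t \<otimes>\<^bsub>SL2Z\<^esub> inv\<^bsub>SL2Z\<^esub> x) [^]\<^bsub>SL2Z\<^esub> q \<in> H"
    using SL2.subgroup_int_pow_closed[OF subgroup assms(4)] .
  show "x \<otimes>\<^bsub>SL2Z\<^esub> (t [^]\<^bsub>SL2Z\<^esub> q \<otimes>\<^bsub>SL2Z\<^esub> s) =
    (x \<otimes>\<^bsub>SL2Z\<^esub> t \<otimes>\<^bsub>SL2Z\<^esub> inv\<^bsub>SL2Z\<^esub> x) [^]\<^bsub>SL2Z\<^esub> q \<otimes>\<^bsub>SL2Z\<^esub> (x \<otimes>\<^bsub>SL2Z\<^esub> s)"
    unfolding SL2.int_pow_conj[OF assms(1,2)]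
    using assms by (simp add: SL2.m_assoc SL2.inv_solve_left)
qed (use assms in simp_all)

lemma U_transversal_conj:
  assumes "x \<in> Tr" "t \<in> carrier SL2Z" "x \<otimes>\<^bsub>SL2Z\<^esub> t \<otimes>\<^bsub>SL2Z\<^esub> inv\<^bsub>SL2Z\<^esub> x \<in> H"
  shows "U H Tr x t = x \<otimes>\<^bsub>SL2Z\<^esub> t \<otimes>\<^bsub>SL2Z\<^esub> inv\<^bsub>SL2Z\<^esub> x"
proof -
  have x: "x \<in> carrier SL2Z"
    using assms(1) by (rule transversal_carrier)
  then have "x \<otimes>\<^bsub>SL2Z\<^esub> t = (x \<otimes>\<^bsub>SL2Z\<^esub> t \<otimes>\<^bsub>SL2Z\<^esub> inv\<^bsub>SL2Z\<^esub> x) \<otimes>\<^bsub>SL2Z\<^esub> x"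
    using assms(2) by (simp add: SL2.m_assoc)
  then have "coset_rep H Tr (x \<otimes>\<^bsub>SL2Z\<^esub> t) =
      coset_rep H Tr ((x \<otimes>\<^bsub>SL2Z\<^esub> t \<otimes>\<^bsub>SL2Z\<^esub> inv\<^bsub>SL2Z\<^esub> x) \<otimes>\<^bsub>SL2Z\<^esub> x)"
    by (rule arg_cong)
  also have "\<dots> = x"
    using assms x by (simp add: coset_rep_mult_subgroup coset_rep_transversal)
  finally have "coset_rep H Tr (x \<otimes>\<^bsub>SL2Z\<^esub> t) = x" .
  then show ?thesis
    by (simp add: U_def)
qed

end

theorem lemma2p18:
  fixes N :: nat and Tr :: "(int^2^2) set" and a q r :: int and M :: "int^2^2"
  assumes "N \<ge> 1"
    and "right_transversal (Gamma1 N) Tr"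
    and "a = q * int N + r" and "0 \<le> r" and "r < int N"
    and "M \<in> carrier SL2Z"
  shows "U (Gamma1 N) Tr (coset_rep (Gamma1 N) Tr M) (Tmat [^]\<^bsub>SL2Z\<^esub> a) =
         (U (Gamma1 N) Tr (coset_rep (Gamma1 N) Tr M) (Tmat [^]\<^bsub>SL2Z\<^esub> int N)) [^]\<^bsub>SL2Z\<^esub> q
         \<otimes>\<^bsub>SL2Z\<^esub> U (Gamma1 N) Tr (coset_rep (Gamma1 N) Tr M) (Tmat [^]\<^bsub>SL2Z\<^esub> r)"
proof -
  interpret SL2Z_transversal "Gamma1 N" Tr
    by (rule SL2Z_transversal.intro[OF subgroup_Gamma1 assms(2)])
  define m where "m = coset_rep (Gamma1 N) Tr M"
  define t where "t = Tmat [^]\<^bsub>SL2Z\<^esub> int N"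
  have m: "m \<in> Tr" "m \<in> carrier SL2Z"
    using coset_rep_spec(1) coset_rep_carrier assms(6) by (simp_all add: m_def)
  have conj_t: "m \<otimes>\<^bsub>SL2Z\<^esub> t \<otimes>\<^bsub>SL2Z\<^esub> inv\<^bsub>SL2Z\<^esub> m \<in> Gamma1 N"
    using conj_translation_mat_in_Gamma1 m(2) by (simp add: t_def Tmat_int_pow)
  have "Tmat [^]\<^bsub>SL2Z\<^esub> a = t [^]\<^bsub>SL2Z\<^esub> q \<otimes>\<^bsub>SL2Z\<^esub> Tmat [^]\<^bsub>SL2Z\<^esub> r"
    unfolding assms(3) mult.commute[of q] t_def SL2.int_pow_mult[OF Tmat_carrier]
      SL2.int_pow_pow[OF Tmat_carrier, symmetric] ..
  then have "U (Gamma1 N) Tr m (Tmat [^]\<^bsub>SL2Z\<^esub> a) =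
      (m \<otimes>\<^bsub>SL2Z\<^esub> t \<otimes>\<^bsub>SL2Z\<^esub> inv\<^bsub>SL2Z\<^esub> m) [^]\<^bsub>SL2Z\<^esub> q \<otimes>\<^bsub>SL2Z\<^esub> U (Gamma1 N) Tr m (Tmat [^]\<^bsub>SL2Z\<^esub> r)"
    using U_int_pow_mult[OF m(2) _ _ conj_t] Tmat_carrier by (simp add: t_def)
  moreover have "U (Gamma1 N) Tr m t = m \<otimes>\<^bsub>SL2Z\<^esub> t \<otimes>\<^bsub>SL2Z\<^esub> inv\<^bsub>SL2Z\<^esub> m"
    using U_transversal_conj[OF m(1) _ conj_t] Tmat_carrier by (simp add: t_def)
  ultimately show ?thesis
    unfolding m_def t_def by simp
qed

end
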